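(* Let trimming proportions satisfy instead $0\le a_i\le a_j<\bar b_i\le\bar b_j\le1$ (with $\bar v:=1-v$), and assume the integrals $\kappa_m$ below are finite. Then (i) $\zeta(a_i,\bar b_j)>0$; (iii) $0<\zeta_r\le1$; (iv) $\kappa_2(a_j,\bar b_j)\ge\zeta_r\,\kappa_1^2(a_i,\bar b_i)$; (v) for all $\sigma>0,\beta>0$, $T_2-\zeta_rT_1^2\ge0$; and, in place of the ordering in the previous case, $\kappa_m(a_i,\bar b_i)\ge\kappa_m(a_j,\bar b_j)$ for every odd positive integer $m$.
   Context: $\Delta(u):=\log(-\log u)$ for $u\in(0,1)$. For $0\le a<b\le1$, $\kappa_m(a,b):=\frac{1}{b-a}\int_a^b[\Delta(u)]^m\,du$. For indices $s,t$, $\zeta(a_s,\bar b_t):=\kappa_1^2(a_s,\bar b_s)-2\kappa_1(a_s,\bar b_s)\kappa_1(a_t,\bar b_t)+\kappa_2(a_t,\bar b_t)$, and $\zeta_r:=\zeta(a_j,\bar b_j)/\zeta(a_i,\bar b_j)$. $T_1=\log\sigma-\beta\kappa_1(a_i,\bar b_i)$, $T_2=(\log\sigma)^2-2\beta\log(\sigma)\kappa_1(a_j,\bar b_j)+\beta^2\kappa_2(a_j,\bar b_j)$. *)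

theory Defs
  imports "HOL-Analysis.Analysis"
begin

definition Delta :: "real \<Rightarrow> real" where
  "Delta u = ln (- ln u)"

definition kappa :: "nat \<Rightarrow> real \<Rightarrow> real \<Rightarrow> real" where
  "kappa m a b = (1 / (b - a)) * (LBINT u=a..b. (Delta u) ^ m)"

text \<open>zeta (a_s, bbar_s) (a_t, bbar_t), the paper's zeta(a_s, bbar_t).\<close>
definition zeta :: "real \<Rightarrow> real \<Rightarrow> real \<Rightarrow> real \<Rightarrow> real" where
  "zeta a1 b1 a2 b2 = (kappa 1 a1 b1)\<^sup>2 - 2 * kappa 1 a1 b1 * kappa 1 a2 b2 + kappa 2 a2 b2"

end

theory Submission
  imports Defs
begin

text \<open>
  After the affine change of variables u = a + (b - a) t, each kappa m a b is the m-th moment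
  of a function on (0, 1), and since Delta is strictly decreasing on (0, 1), the function for
  the window [a_j, 1 - b_j] is dominated pointwise by the one for [a_i, 1 - b_i]; odd powers
  preserve this order. Strict monotonicity also makes the variance
  V = kappa_2(a_j, 1 - b_j) - kappa_1(a_j, 1 - b_j)^2 positive. With d the difference of the
  two first moments, zeta(a_i, 1 - b_j) = V + d^2 and zeta_r = V / (V + d^2), and the quadratic
  form in (iv) and (v) is a sum of squares by the identity
  (V + d^2)(y^2 + z^2 V) - V (y - z d)^2 = (d y + z V)^2.
\<close>

lemma interval_average_as_unit_integral:
  fixes F :: "real \<Rightarrow> real" and a b :: real
  assumes ab: "a < b" and int: "set_integrable lborel {a..b} F"
  shows "set_integrable lborel {0<..<1} (\<lambda>t. F (a + (b - a) * t))"
    and "(1 / (b - a)) * (LBINT u=a..b. F u) = (LBINT t:{0<..<1}. F (a + (b - a) * t))"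
proof -
  have ind: "indicator {a<..<b} (a + (b - a) * t) = (indicator {0<..<1} t :: real)" for t
  proof -
    have "(a + (b - a) * t \<in> {a<..<b}) = (0 < (b - a) * t \<and> (b - a) * t < (b - a) * 1)"
      unfolding greaterThanLessThan_iff by argo
    also have "\<dots> = (t \<in> {0<..<1})"
      using ab by (simp add: zero_less_mult_iff mult_less_cancel_left)
    finally show ?thesis by (simp add: indicator_def)
  qed
  have nz: "b - a \<noteq> 0" using ab by simp
  have "set_integrable lborel {a<..<b} F"
    by (rule set_integrable_subset[OF int]) auto
  then have "integrable lborel (\<lambda>x. indicator {a<..<b} x *\<^sub>R F x)"
    unfolding set_integrable_def .
  from lborel_integrable_real_affine[OF this nz, of a]
  show "set_integrable lborel {0<..<1} (\<lambda>t. F (a + (b - a) * t))"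
    unfolding set_integrable_def ind by simp
  have "(LBINT u=a..b. F u) = (LBINT u:{a<..<b}. F u)"
    using ab by (simp add: interval_lebesgue_integral_def einterval_def greaterThanLessThan_def
        greaterThan_def lessThan_def Int_def)
  also have "\<dots> = \<bar>b - a\<bar> *\<^sub>R (\<integral>t. indicator {a<..<b} (a + (b - a) * t) *\<^sub>R F (a + (b - a) * t) \<partial>lborel)"
    unfolding set_lebesgue_integral_def by (rule lborel_integral_real_affine[OF nz])
  also have "\<dots> = (b - a) * (LBINT t:{0<..<1}. F (a + (b - a) * t))"
    using ab unfolding set_lebesgue_integral_def ind by simp
  finally show "(1 / (b - a)) * (LBINT u=a..b. F u) = (LBINT t:{0<..<1}. F (a + (b - a) * t))"
    using ab by simp
qed

lemma set_integral_pos_of_bounded_below_on_interval: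
  fixes h :: "real \<Rightarrow> real"
  assumes int: "set_integrable lborel S h" and nonneg: "\<And>t. t \<in> S \<Longrightarrow> 0 \<le> h t"
    and sub: "{p..q} \<subseteq> S" and pq: "p < q"
    and lower: "\<And>t. t \<in> {p..q} \<Longrightarrow> e \<le> h t" and e: "0 < e"
  shows "0 < (LBINT t:S. h t)"
proof -
  have "0 < e * (q - p)" using e pq by simp
  also have "e * (q - p) = (LBINT t:{p..q}. e)"
    using pq by (simp add: set_integral_const)
  also have "\<dots> \<le> (LBINT t:S. h t)"
    unfolding set_lebesgue_integral_def
  proof (rule integral_mono)
    show "integrable lborel (\<lambda>x. indicat_real {p..q} x *\<^sub>R e)"
      using pq by (intro integrable_scaleR_left integrable_real_indicator) auto
    show "integrable lborel (\<lambda>x. indicat_real S x *\<^sub>R h x)"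
      using int unfolding set_integrable_def .
    show "indicat_real {p..q} t *\<^sub>R e \<le> indicat_real S t *\<^sub>R h t" for t
      using sub lower[of t] nonneg[of t] by (cases "t \<in> {p..q}") (auto simp: indicator_def)
  qed
  finally show ?thesis .
qed

lemma set_integral_square_deviation_pos:
  fixes g :: "real \<Rightarrow> real"
  assumes int: "set_integrable lborel {0<..<1} (\<lambda>t. (g t - c)^2)"
    and dec: "\<And>s t. 0 < s \<Longrightarrow> s < t \<Longrightarrow> t < 1 \<Longrightarrow> g t < g s"
  shows "0 < (LBINT t:{0<..<1}. (g t - c)^2)"
proof (cases "g (1/2) \<le> c")
  case True
  show ?thesis
  proof (rule set_integral_pos_of_bounded_below_on_interval
      [OF int _ _ _ _ _, of "3/4" "7/8" "(g (1/2) - g (3/4))^2"])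
    fix t :: real assume t: "t \<in> {3/4..7/8}"
    have "g t \<le> g (3/4)"
    proof (cases "t = 3/4")
      case False
      then show ?thesis using dec[of "3/4" t] t by auto
    qed (metis order_refl)
    then have "g (1/2) - g (3/4) \<le> c - g t" using True by simp
    moreover have "0 \<le> g (1/2) - g (3/4)" using dec[of "1/2" "3/4"] by simp
    ultimately show "(g (1/2) - g (3/4))^2 \<le> (g t - c)^2"
      by (metis power2_commute power_mono)
  qed (use dec[of "1/2" "3/4"] in auto)
next
  case False
  show ?thesis
  proof (rule set_integral_pos_of_bounded_below_on_interval
      [OF int _ _ _ _ _, of "1/8" "1/4" "(g (1/4) - g (1/2))^2"])
    fix t :: real assume t: "t \<in> {1/8..1/4}"
    have "g (1/4) \<le> g t"
    proof (cases "t = 1/4")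
      case False
      then show ?thesis using dec[of t "1/4"] t by auto
    qed (metis order_refl)
    then have "g (1/4) - g (1/2) \<le> g t - c" using False by simp
    moreover have "0 \<le> g (1/4) - g (1/2)" using dec[of "1/4" "1/2"] by simp
    ultimately show "(g (1/4) - g (1/2))^2 \<le> (g t - c)^2" by (rule power_mono)
  qed (use dec[of "1/4" "1/2"] in auto)
qed

lemma square_set_integral_less_set_integral_square:
  fixes g :: "real \<Rightarrow> real"
  assumes int: "set_integrable lborel {0<..<1} g"
    and int_sq: "set_integrable lborel {0<..<1} (\<lambda>t. g t ^ 2)"
    and dec: "\<And>s t. 0 < s \<Longrightarrow> s < t \<Longrightarrow> t < 1 \<Longrightarrow> g t < g s"
  shows "(LBINT t:{0<..<1}. g t)^2 < (LBINT t:{0<..<1}. g t ^ 2)"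
proof -
  define c where "c = (LBINT t:{0<..<1}. g t)"
  have int_const: "set_integrable lborel {0<..<1::real} (\<lambda>_. c^2)"
    unfolding set_integrable_def by (intro integrable_scaleR_left integrable_real_indicator) auto
  have int_lin: "set_integrable lborel {0<..<1} (\<lambda>t. 2 * c * g t - c^2)"
    by (intro set_integral_diff(1) set_integrable_mult_right int int_const)
  have expand: "(\<lambda>t. (g t - c)^2) = (\<lambda>t. g t ^ 2 - (2 * c * g t - c^2))"
    by (auto simp: power2_eq_square algebra_simps)
  have int_dev: "set_integrable lborel {0<..<1} (\<lambda>t. (g t - c)^2)"
    unfolding expand by (rule set_integral_diff(1)[OF int_sq int_lin])
  have "0 < (LBINT t:{0<..<1}. (g t - c)^2)"
    by (rule set_integral_square_deviation_pos[OF int_dev dec])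
  also have "\<dots> = (LBINT t:{0<..<1}. g t ^ 2) - (2 * c * (LBINT t:{0<..<1}. g t) - c^2)"
    unfolding expand
    by (simp add: set_integral_diff(2)[OF int_sq int_lin] set_integral_diff(2)[OF _ int_const]
        set_integrable_mult_right int set_integral_mult_right set_integral_const)
  finally show ?thesis unfolding c_def by (simp add: power2_eq_square)
qed

lemma Delta_strict_antimono: "0 < x \<Longrightarrow> x < y \<Longrightarrow> y < 1 \<Longrightarrow> Delta y < Delta x"
  unfolding Delta_def by (simp add: ln_less_cancel_iff)

lemma Delta_antimono: "0 < x \<Longrightarrow> x \<le> y \<Longrightarrow> y < 1 \<Longrightarrow> Delta y \<le> Delta x"
  using Delta_strict_antimono by (cases "x = y") (auto simp: less_le)

lemma affine_unit_image_in_unit_interval: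
  fixes a b t :: real
  assumes "0 \<le> a" "a < b" "b \<le> 1" "t \<in> {0<..<1}"
  shows "0 < a + (b - a) * t" and "a + (b - a) * t < 1"
proof -
  show "0 < a + (b - a) * t" using assms by (simp add: add_nonneg_pos)
  have "a + (b - a) * t < a + (b - a) * 1"
    using assms by (intro add_strict_left_mono mult_strict_left_mono) auto
  then show "a + (b - a) * t < 1" using assms by simp
qed

lemma kappa_as_unit_integral:
  assumes "a < b" "set_integrable lborel {a..b} (\<lambda>u. Delta u ^ m)"
  shows "kappa m a b = (LBINT t:{0<..<1}. Delta (a + (b - a) * t) ^ m)"
  unfolding kappa_def using interval_average_as_unit_integral(2)[OF assms] by simp

lemma kappa_1_squared_less_kappa_2:
  assumes ab: "0 \<le> a" "a < b" "b \<le> 1"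
    and int: "\<And>m. set_integrable lborel {a..b} (\<lambda>u. Delta u ^ m)"
  shows "(kappa 1 a b)^2 < kappa 2 a b"
proof -
  define g where "g t = Delta (a + (b - a) * t)" for t
  have int_g: "set_integrable lborel {0<..<1} (\<lambda>t. g t ^ m)" for m
    unfolding g_def using interval_average_as_unit_integral(1)[OF ab(2) int] .
  have "g t < g s" if "0 < s" "s < t" "t < 1" for s t
    unfolding g_def
  proof (rule Delta_strict_antimono)
    show "0 < a + (b - a) * s" "a + (b - a) * t < 1"
      using affine_unit_image_in_unit_interval[OF ab] that by auto
    show "a + (b - a) * s < a + (b - a) * t" using that ab by simp
  qed
  from square_set_integral_less_set_integral_square[OF _ int_g this] int_g[of 1]
  show ?thesis using kappa_as_unit_integral[OF ab(2) int] unfolding g_def by simp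
qed

lemma kappa_odd_antimono_window:
  assumes ord: "0 \<le> a" "a \<le> a'" "a' < b" "b \<le> b'" "b' \<le> 1" and "odd m"
    and int: "set_integrable lborel {a..b} (\<lambda>u. Delta u ^ m)"
    and int': "set_integrable lborel {a'..b'} (\<lambda>u. Delta u ^ m)"
  shows "kappa m a' b' \<le> kappa m a b"
proof -
  have ab: "a < b" and ab': "a' < b'" using ord by auto
  show ?thesis
    unfolding kappa_as_unit_integral[OF ab int] kappa_as_unit_integral[OF ab' int']
  proof (rule set_integral_mono)
    show "set_integrable lborel {0<..<1} (\<lambda>t. Delta (a + (b - a) * t) ^ m)"
      "set_integrable lborel {0<..<1} (\<lambda>t. Delta (a' + (b' - a') * t) ^ m)"
      using interval_average_as_unit_integral(1) ab int ab' int' by auto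
    fix t :: real assume t: "t \<in> {0<..<1}"
    have "a' + (b' - a') * t - (a + (b - a) * t) = (1 - t) * (a' - a) + t * (b' - b)"
      by (simp add: algebra_simps)
    also have "\<dots> \<ge> 0" using t ord by (intro add_nonneg_nonneg mult_nonneg_nonneg) auto
    finally have "Delta (a' + (b' - a') * t) \<le> Delta (a + (b - a) * t)"
      using affine_unit_image_in_unit_interval[OF _ ab _ t] affine_unit_image_in_unit_interval[OF _ ab' _ t] ord
      by (intro Delta_antimono) auto
    then show "Delta (a' + (b' - a') * t) ^ m \<le> Delta (a + (b - a) * t) ^ m"
      using \<open>odd m\<close> by (simp add: power_mono_odd)
  qed
qed

lemma weighted_square_le_sum_squares:
  fixes V d y z :: real
  assumes "0 < V"
  shows "V / (V + d^2) * (y - z * d)^2 \<le> y^2 + z^2 * V"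
proof -
  have pos: "0 < V + d^2" using assms by (simp add: add_pos_nonneg)
  have "(V + d^2) * (y^2 + z^2 * V) - V * (y - z * d)^2 = (d * y + z * V)^2"
    by (simp add: power2_eq_square algebra_simps)
  then have "V * (y - z * d)^2 \<le> (V + d^2) * (y^2 + z^2 * V)"
    by (smt (verit) zero_le_power2)
  then show ?thesis using pos by (simp add: divide_le_eq mult.commute)
qed

lemma zeta_eq_variance_plus_square:
  "zeta a1 b1 a2 b2 = (kappa 2 a2 b2 - (kappa 1 a2 b2)^2) + (kappa 1 a1 b1 - kappa 1 a2 b2)^2"
  unfolding zeta_def by (simp add: power2_eq_square algebra_simps)

lemma zeta_ratio_quadratic_form_bound:
  assumes var: "(kappa 1 a2 b2)^2 < kappa 2 a2 b2"
  shows "zeta a2 b2 a2 b2 / zeta a1 b1 a2 b2 * (x - y * kappa 1 a1 b1)^2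
    \<le> x^2 - 2 * y * x * kappa 1 a2 b2 + y^2 * kappa 2 a2 b2"
proof -
  define V where "V = kappa 2 a2 b2 - (kappa 1 a2 b2)^2"
  define d where "d = kappa 1 a1 b1 - kappa 1 a2 b2"
  have "V / (V + d^2) * ((x - y * kappa 1 a2 b2) - y * d)^2 \<le> (x - y * kappa 1 a2 b2)^2 + y^2 * V"
    using var unfolding V_def by (intro weighted_square_le_sum_squares) simp
  moreover have "(x - y * kappa 1 a2 b2) - y * d = x - y * kappa 1 a1 b1"
    unfolding d_def by (simp add: algebra_simps)
  moreover have "(x - y * kappa 1 a2 b2)^2 + y^2 * V = x^2 - 2 * y * x * kappa 1 a2 b2 + y^2 * kappa 2 a2 b2"
    unfolding V_def by (simp add: power2_eq_square algebra_simps)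
  moreover have "zeta a2 b2 a2 b2 = V" "zeta a1 b1 a2 b2 = V + d^2"
    unfolding V_def d_def zeta_eq_variance_plus_square by simp_all
  ultimately show ?thesis by (simp only:)
qed

theorem corollary3:
  fixes ai aj bi bj :: real
  assumes ord: "0 \<le> ai" "ai \<le> aj" "aj < 1 - bi" "1 - bi \<le> 1 - bj" "1 - bj \<le> 1"
    and fin_i: "\<And>m. set_integrable lborel {ai..1 - bi} (\<lambda>u. (Delta u) ^ m)"
    and fin_j: "\<And>m. set_integrable lborel {aj..1 - bj} (\<lambda>u. (Delta u) ^ m)"
  defines "zr \<equiv> zeta aj (1 - bj) aj (1 - bj) / zeta ai (1 - bi) aj (1 - bj)"
  shows "zeta ai (1 - bi) aj (1 - bj) > 0
    \<and> (0 < zr \<and> zr \<le> 1)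
    \<and> kappa 2 aj (1 - bj) \<ge> zr * (kappa 1 ai (1 - bi))\<^sup>2
    \<and> (\<forall>\<sigma>>0. \<forall>\<beta>>0.
         (ln \<sigma>)\<^sup>2 - 2 * \<beta> * ln \<sigma> * kappa 1 aj (1 - bj) + \<beta>\<^sup>2 * kappa 2 aj (1 - bj)
         - zr * (ln \<sigma> - \<beta> * kappa 1 ai (1 - bi))\<^sup>2 \<ge> 0)
    \<and> (\<forall>m. odd m \<longrightarrow> kappa m ai (1 - bi) \<ge> kappa m aj (1 - bj))"
proof -
  define V where "V = kappa 2 aj (1 - bj) - (kappa 1 aj (1 - bj))^2"
  define d where "d = kappa 1 ai (1 - bi) - kappa 1 aj (1 - bj)"
  have "0 < V"
    using kappa_1_squared_less_kappa_2[OF _ _ _ fin_j] ord unfolding V_def by simp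
  have zeta_ij: "zeta ai (1 - bi) aj (1 - bj) = V + d^2"
    and zr: "zr = V / (V + d^2)"
    unfolding zr_def V_def d_def zeta_eq_variance_plus_square by simp_all
  have quad: "zr * (x - y * kappa 1 ai (1 - bi))^2
      \<le> x^2 - 2 * y * x * kappa 1 aj (1 - bj) + y^2 * kappa 2 aj (1 - bj)" for x y
    unfolding zr_def using \<open>0 < V\<close>
    by (intro zeta_ratio_quadratic_form_bound) (simp add: V_def)
  have "0 < V + d^2" using \<open>0 < V\<close> by (simp add: add_pos_nonneg)
  moreover have "0 < zr \<and> zr \<le> 1"
    unfolding zr using \<open>0 < V\<close> \<open>0 < V + d^2\<close> by (simp add: divide_le_eq)
  moreover have "zr * (kappa 1 ai (1 - bi))^2 \<le> kappa 2 aj (1 - bj)"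
    using quad[of 0 1] by simp
  moreover have "kappa m aj (1 - bj) \<le> kappa m ai (1 - bi)" if "odd m" for m
    using kappa_odd_antimono_window[OF ord that fin_i fin_j] .
  ultimately show ?thesis using zeta_ij quad by (auto simp: power2_eq_square)
qed

end
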